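(* Let $p=(p_i)_{i\in\mathbb{N}}$ be a cookie environment with $p_i\in[\frac12,1)$ for all $i$, and suppose $\delta=\sum_{i=1}^\infty(2p_i-1)<\infty$. Let $\rho(x)=\mathbb{E}[U_p(x)]-x$. Then $\lim_{x\to\infty}\rho(x)=\delta$, and furthermore $\rho(x)\le\delta$ for all positive integers $x$.
   Context: For a cookie environment $p$, let $B_1,B_2,\dots$ be independent Bernoulli random variables with $\Pr[B_i=1]=p_i$ ($B_i=1$ is a "success", $B_i=0$ a "failure"). For a positive integer $x$, $U_p(x)=\inf\{k\in\mathbb{N}:\sum_{i=1}^k(1-B_i)=x\}-x$, i.e. the number of successes before the $x$-th failure. *)

theory Defs
  imports "HOL-Probability.Probability"
begin

text \<open>Cookie environment p :: nat => real, indexed from 0 (p 0 is the paper's p_1).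
  Outcome space: infinite product of Bernoulli measures; omega i = True means B_i = 1 (success).\<close>

definition cookie_space :: "(nat \<Rightarrow> real) \<Rightarrow> (nat \<Rightarrow> bool) measure" where
  "cookie_space p = (\<Pi>\<^sub>M i\<in>UNIV. measure_pmf (bernoulli_pmf (p i)))"

definition failures :: "(nat \<Rightarrow> bool) \<Rightarrow> nat \<Rightarrow> nat" where
  "failures \<omega> k = card {i. i < k \<and> \<not> \<omega> i}"

text \<open>U_p(x): number of successes before the x-th failure
  (inf {k. failures in first k trials = x} - x).\<close>
definition U :: "nat \<Rightarrow> (nat \<Rightarrow> bool) \<Rightarrow> nat" where
  "U x \<omega> = (LEAST k. failures \<omega> k = x) - x"

definition rho :: "(nat \<Rightarrow> real) \<Rightarrow> nat \<Rightarrow> real" where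
  "rho p x = (\<integral>\<omega>. real (U x \<omega>) \<partial>cookie_space p) - real x"

end

theory Submission
  imports Defs
begin

text \<open>
  Write F_k for the number of failures among the first k trials. Almost surely there are infinitely
  many failures (as p_i tends to 1/2), so the x-th failure occurs at a finite time T, and the
  trials before T are exactly those k with F_k < x. Counting successes and failures among them gives
  U_p(x) = \<Sum>_k [B_k = 1, F_k < x] and x = \<Sum>_k [B_k = 0, F_k < x].
  The event {F_k < x} depends only on the trials preceding trial k and is therefore independent
  of B_k, so E U_p(x) = \<Sum>_k p_k P(F_k < x) and x = \<Sum>_k (1 - p_k) P(F_k < x), whence
  \<rho>(x) = \<Sum>_k (2 p_k - 1) P(F_k < x). As 0 \<le> P(F_k < x) \<le> 1, with equality to 1 for k < x,
  this lies between \<Sum>_{k<x} (2 p_k - 1) and \<delta>, and both bounds tend to \<delta>.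
\<close>

lemma (in product_prob_space) indep_vars_PiM_components:
  "P.indep_vars M (\<lambda>i \<omega>. \<omega> i) I"
proof (cases "I = {}")
  case True
  then show ?thesis unfolding P.indep_vars_def P.indep_sets_def by simp
next
  case False
  have "distr (PiM I M) (PiM I M) (\<lambda>x. \<lambda>i\<in>I. x i) = distr (PiM I M) (PiM I M) (\<lambda>x. x)"
    by (rule distr_cong) (auto simp: space_PiM)
  also have "\<dots> = PiM I M" by (rule distr_id)
  also have "\<dots> = (\<Pi>\<^sub>M i\<in>I. distr (PiM I M) (M i) (\<lambda>\<omega>. \<omega> i))"
    by (intro PiM_cong refl PiM_component[symmetric])
  finally show ?thesis
    using False by (subst P.indep_vars_iff_distr_eq_PiM') (simp_all add: measurable_component_singleton)
qed

lemma (in product_prob_space) emeasure_PiM_component_indep_restrict: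
  assumes "i \<in> I" "J \<subseteq> I" "i \<notin> J" "B \<in> sets (M i)" "A \<in> sets (PiM J M)"
  shows "emeasure (PiM I M) {\<omega>\<in>space (PiM I M). \<omega> i \<in> B \<and> restrict \<omega> J \<in> A}
       = emeasure (M i) B * emeasure (PiM I M) {\<omega>\<in>space (PiM I M). restrict \<omega> J \<in> A}"
proof -
  let ?\<Omega> = "space (PiM I M)" and ?B' = "{f\<in>space (PiM {i} M). f i \<in> B}"
  have indep: "P.indep_var (PiM {i} M) (\<lambda>\<omega>. restrict \<omega> {i}) (PiM J M) (\<lambda>\<omega>. restrict \<omega> J)"
    using assms by (intro P.indep_var_restrict[OF indep_vars_PiM_components]) auto
  have B': "?B' \<in> sets (PiM {i} M)"
    using assms(4) by measurable
  have "P.prob {\<omega>\<in>?\<Omega>. \<omega> i \<in> B \<and> restrict \<omega> J \<in> A}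
      = P.prob ((\<lambda>\<omega>. (restrict \<omega> {i}, restrict \<omega> J)) -` (?B' \<times> A) \<inter> ?\<Omega>)"
    using assms(1) by (intro arg_cong[where f=P.prob]) (auto simp: space_PiM)
  also have "\<dots> = P.prob ((\<lambda>\<omega>. restrict \<omega> {i}) -` ?B' \<inter> ?\<Omega>)
      * P.prob ((\<lambda>\<omega>. restrict \<omega> J) -` A \<inter> ?\<Omega>)"
    by (rule P.indep_varD[OF indep B' assms(5)])
  also have "(\<lambda>\<omega>. restrict \<omega> {i}) -` ?B' \<inter> ?\<Omega> = {\<omega>\<in>?\<Omega>. \<omega> i \<in> B}"
    using assms(1) by (auto simp: space_PiM)
  also have "(\<lambda>\<omega>. restrict \<omega> J) -` A \<inter> ?\<Omega> = {\<omega>\<in>?\<Omega>. restrict \<omega> J \<in> A}"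
    by auto
  finally have "P.prob {\<omega>\<in>?\<Omega>. \<omega> i \<in> B \<and> restrict \<omega> J \<in> A}
      = P.prob {\<omega>\<in>?\<Omega>. \<omega> i \<in> B} * P.prob {\<omega>\<in>?\<Omega>. restrict \<omega> J \<in> A}" .
  moreover have "P.prob {\<omega>\<in>?\<Omega>. \<omega> i \<in> B} = measure (M i) B"
    using assms by (simp add: emeasure_PiM_Collect_single measure_def)
  ultimately show ?thesis
    by (simp add: P.emeasure_eq_measure M.emeasure_eq_measure ennreal_mult)
qed

lemma failures_eq_sum: "failures \<omega> k = (\<Sum>i<k. if \<omega> i then 0 else 1)"
  unfolding failures_def by (simp add: sum.If_cases Int_def lessThan_def conj_commute)

lemma failures_cong:
  "(\<And>i. i < k \<Longrightarrow> \<omega> i = \<omega>' i) \<Longrightarrow> failures \<omega> k = failures \<omega>' k"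
  unfolding failures_eq_sum by (intro sum.cong) auto

lemma failures_0 [simp]: "failures \<omega> 0 = 0"
  by (simp add: failures_def)

lemma failures_Suc: "failures \<omega> (Suc k) = failures \<omega> k + (if \<omega> k then 0 else 1)"
  unfolding failures_eq_sum by simp

lemma failures_mono: "j \<le> k \<Longrightarrow> failures \<omega> j \<le> failures \<omega> k"
  unfolding failures_def by (rule card_mono) auto

lemma failures_le: "failures \<omega> k \<le> k"
  unfolding failures_def using card_mono[of "{..<k}" "{i. i < k \<and> \<not> \<omega> i}"] by auto

lemma failures_attains: "x \<le> failures \<omega> k \<Longrightarrow> \<exists>j\<le>k. failures \<omega> j = x"
  using nat0_intermed_int_val[of k "\<lambda>i. int (failures \<omega> i)" "int x"]
  by (auto simp: failures_Suc)

lemma failures_unbounded: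
  assumes "\<exists>\<^sub>\<infinity>i. \<not> \<omega> i"
  shows "\<exists>k. x \<le> failures \<omega> k"
proof (induction x)
  case (Suc x)
  then obtain k where k: "x \<le> failures \<omega> k" by auto
  obtain i where "i \<ge> k" "\<not> \<omega> i"
    using assms by (auto simp: INFM_nat_le)
  then have "Suc x \<le> failures \<omega> (Suc i)"
    using k failures_mono[of k i \<omega>] by (simp add: failures_Suc)
  then show ?case by blast
qed simp

lemma failures_less_iff_less_hitting_time:
  assumes "\<exists>k. failures \<omega> k = x"
  shows "failures \<omega> k < x \<longleftrightarrow> k < (LEAST k. failures \<omega> k = x)"
proof
  assume "failures \<omega> k < x"
  then show "k < (LEAST k. failures \<omega> k = x)"
    using LeastI_ex[OF assms] failures_mono[of "LEAST k. failures \<omega> k = x" k \<omega>] by linarith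
next
  assume "k < (LEAST k. failures \<omega> k = x)"
  then show "failures \<omega> k < x"
    using failures_attains[of x \<omega> k] Least_le[of "\<lambda>k. failures \<omega> k = x"] by force
qed

lemma suminf_indicator_before_hitting_time:
  assumes "\<exists>\<^sub>\<infinity>i. \<not> \<omega> i"
  shows "(\<Sum>k. indicator {\<omega>. \<omega> k = b \<and> failures \<omega> k < x} \<omega> :: ennreal)
       = of_nat (if b then U x \<omega> else x)"
proof -
  define T where "T = (LEAST k. failures \<omega> k = x)"
  have ex: "\<exists>k. failures \<omega> k = x"
    using failures_unbounded[OF assms] failures_attains by blast
  have T: "failures \<omega> T = x"
    unfolding T_def by (rule LeastI_ex[OF ex])
  have before: "failures \<omega> k < x \<longleftrightarrow> k < T" for k
    unfolding T_def by (rule failures_less_iff_less_hitting_time[OF ex])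
  have "(\<Sum>k. indicator {\<omega>. \<omega> k = b \<and> failures \<omega> k < x} \<omega> :: ennreal)
      = (\<Sum>k<T. indicator {\<omega>. \<omega> k = b \<and> failures \<omega> k < x} \<omega>)"
    by (rule suminf_finite) (auto simp: before)
  also have "\<dots> = of_nat (\<Sum>k<T. if \<omega> k = b then 1 else 0)"
    unfolding of_nat_sum by (intro sum.cong) (auto simp: before)
  also have "(\<Sum>k<T. if \<omega> k = b then 1 else 0) = (if b then U x \<omega> else x)"
  proof (cases b)
    case True
    have "(\<Sum>k<T. if \<omega> k then 1 else 0) + failures \<omega> T = T"
      unfolding failures_eq_sum sum.distrib[symmetric] by (simp add: if_distrib cong: if_cong)
    then show ?thesis
      using True T by (simp add: U_def T_def[symmetric])
  next
    case False
    have "(\<Sum>k<T. if \<omega> k = False then 1 else 0) = failures \<omega> T"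
      unfolding failures_eq_sum by (rule sum.cong) auto
    then show ?thesis
      using False T by simp
  qed
  finally show ?thesis .
qed

lemma prob_space_cookie_space: "prob_space (cookie_space p)"
  unfolding cookie_space_def by (rule prob_space_PiM) (simp add: prob_space_measure_pmf)

lemma space_cookie_space [simp]: "space (cookie_space p) = UNIV"
  unfolding cookie_space_def by (simp add: space_PiM)

lemma sets_cookie_space_Collect:
  "Measurable.pred (cookie_space p) P \<Longrightarrow> {\<omega>. P \<omega>} \<in> sets (cookie_space p)"
  by (drule predE) simp

lemma measurable_cookie_coordinate [measurable]:
  "(\<lambda>\<omega>. \<omega> i) \<in> measurable (cookie_space p) (count_space UNIV)"
proof -
  have "(\<lambda>\<omega>. \<omega> i) \<in> measurable (cookie_space p) (measure_pmf (bernoulli_pmf (p i)))"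
    unfolding cookie_space_def by (rule measurable_component_singleton) simp
  then show ?thesis by (simp add: measurable_cong_sets)
qed

lemma measurable_failures [measurable]:
  "(\<lambda>\<omega>. failures \<omega> k) \<in> measurable (cookie_space p) (count_space UNIV)"
  unfolding failures_eq_sum by measurable

lemma measurable_U [measurable]: "U x \<in> measurable (cookie_space p) (count_space UNIV)"
  unfolding U_def by measurable

lemma measurable_failures_PiM:
  assumes "\<And>i. sets (M i) = sets (count_space UNIV)"
  shows "(\<lambda>f. failures f k) \<in> measurable (PiM {..<k} M) (count_space UNIV)"
  unfolding failures_eq_sum
proof (intro measurable_sum_nat)
  fix i :: nat assume "i \<in> {..<k}"
  then have "(\<lambda>f. f i) \<in> measurable (PiM {..<k} M) (count_space UNIV)"
    using measurable_component_singleton[of i "{..<k}" M] by (simp add: measurable_cong_sets[OF refl assms])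
  then show "(\<lambda>f. if f i then 0 else 1) \<in> measurable (PiM {..<k} M) (count_space UNIV)"
    by (rule measurable_compose[where g="\<lambda>b. if b then 0 else 1"]) simp
qed

lemma emeasure_coordinate_failures_less:
  "emeasure (cookie_space p) {\<omega>. \<omega> k = b \<and> failures \<omega> k < x}
     = pmf (bernoulli_pmf (p k)) b * emeasure (cookie_space p) {\<omega>. failures \<omega> k < x}"
proof -
  interpret product_prob_space "\<lambda>i. measure_pmf (bernoulli_pmf (p i))" UNIV
    by unfold_locales
  let ?A = "{f\<in>space (PiM {..<k} (\<lambda>i. measure_pmf (bernoulli_pmf (p i)))). failures f k < x}"
  have "?A \<in> sets (PiM {..<k} (\<lambda>i. measure_pmf (bernoulli_pmf (p i))))"
    using measurable_failures_PiM[of "\<lambda>i. measure_pmf (bernoulli_pmf (p i))" k] by measurable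
  moreover have "failures (restrict \<omega> {..<k}) k = failures \<omega> k" for \<omega> :: "nat \<Rightarrow> bool"
    by (rule failures_cong) simp
  ultimately show ?thesis
    using emeasure_PiM_component_indep_restrict[of k "{..<k}" "{b}" ?A]
    by (simp add: cookie_space_def space_PiM emeasure_pmf_single)
qed

lemma emeasure_all_successes:
  assumes "\<And>i. 0 \<le> p i \<and> p i \<le> 1" and "finite J"
  shows "emeasure (cookie_space p) {\<omega>. \<forall>i\<in>J. \<omega> i} = (\<Prod>i\<in>J. ennreal (p i))"
proof -
  interpret product_prob_space "\<lambda>i. measure_pmf (bernoulli_pmf (p i))" UNIV
    by unfold_locales
  show ?thesis
    using emeasure_PiM_Collect[of J "\<lambda>_. {True}"] assms
    by (simp add: cookie_space_def space_PiM emeasure_pmf_single)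
qed

lemma emeasure_eventually_all_successes:
  assumes p: "\<And>i. 0 \<le> p i \<and> p i \<le> 1" and "c < 1" and c: "\<And>i. i \<ge> n \<Longrightarrow> p i \<le> c"
  shows "emeasure (cookie_space p) {\<omega>. \<forall>i\<ge>n. \<omega> i} = 0"
proof -
  interpret prob_space "cookie_space p"
    by (rule prob_space_cookie_space)
  let ?Z = "{\<omega>. \<forall>i\<ge>n. \<omega> i}"
  have "0 \<le> c"
    using p[of n] c[of n] by simp
  have "prob ?Z \<le> c ^ m" for m
  proof -
    have "emeasure (cookie_space p) ?Z \<le> emeasure (cookie_space p) {\<omega>. \<forall>i\<in>{n..<n+m}. \<omega> i}"
      by (intro emeasure_mono sets_cookie_space_Collect) auto
    also have "\<dots> = ennreal (\<Prod>i\<in>{n..<n+m}. p i)"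
      using p by (simp add: emeasure_all_successes prod_ennreal)
    also have "\<dots> \<le> ennreal (\<Prod>i\<in>{n..<n+m}. c)"
      using p c by (intro ennreal_leI prod_mono) auto
    finally show ?thesis
      using \<open>0 \<le> c\<close> by (simp add: emeasure_eq_measure)
  qed
  then have "prob ?Z \<le> 0"
    using LIMSEQ_realpow_zero[OF \<open>0 \<le> c\<close> \<open>c < 1\<close>] by (intro LIMSEQ_le_const) auto
  then show ?thesis
    by (simp add: emeasure_eq_measure antisym[OF _ measure_nonneg])
qed

lemma AE_infinitely_many_failures:
  assumes "\<And>i. 0 \<le> p i \<and> p i \<le> 1" and "c < 1" and "eventually (\<lambda>i. p i \<le> c) sequentially"
  shows "AE \<omega> in cookie_space p. \<exists>\<^sub>\<infinity>i. \<not> \<omega> i"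
proof -
  obtain N where N: "\<And>i. i \<ge> N \<Longrightarrow> p i \<le> c"
    using assms(3) by (auto simp: eventually_sequentially)
  have "AE \<omega> in cookie_space p. \<exists>i\<ge>n. \<not> \<omega> i" for n
  proof (rule AE_I')
    have "emeasure (cookie_space p) {\<omega>. \<forall>i\<ge>max n N. \<omega> i} = 0"
      using assms(1,2) N by (rule emeasure_eventually_all_successes) simp
    moreover have "{\<omega>. \<forall>i\<ge>max n N. \<omega> i} \<in> sets (cookie_space p)"
      by (intro sets_cookie_space_Collect) measurable
    ultimately show "{\<omega>. \<forall>i\<ge>max n N. \<omega> i} \<in> null_sets (cookie_space p)"
      by (rule null_setsI)
  qed auto
  then show ?thesis
    by (simp add: AE_all_countable INFM_nat_le)
qed

lemma nn_integral_count_before_hitting_time: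
  assumes "AE \<omega> in cookie_space p. \<exists>\<^sub>\<infinity>i. \<not> \<omega> i"
  shows "(\<integral>\<^sup>+\<omega>. of_nat (if b then U x \<omega> else x) \<partial>cookie_space p)
       = (\<Sum>k. ennreal (pmf (bernoulli_pmf (p k)) b * measure (cookie_space p) {\<omega>. failures \<omega> k < x}))"
proof -
  interpret prob_space "cookie_space p"
    by (rule prob_space_cookie_space)
  have sets: "{\<omega>. \<omega> k = b \<and> failures \<omega> k < x} \<in> sets (cookie_space p)" for k
    by (intro sets_cookie_space_Collect) measurable
  have "(\<integral>\<^sup>+\<omega>. of_nat (if b then U x \<omega> else x) \<partial>cookie_space p)
      = (\<integral>\<^sup>+\<omega>. (\<Sum>k. indicator {\<omega>. \<omega> k = b \<and> failures \<omega> k < x} \<omega>) \<partial>cookie_space p)"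
    by (intro nn_integral_cong_AE eventually_mono[OF assms] suminf_indicator_before_hitting_time[symmetric])
  also have "\<dots> = (\<Sum>k. emeasure (cookie_space p) {\<omega>. \<omega> k = b \<and> failures \<omega> k < x})"
    using sets by (simp add: nn_integral_suminf)
  also have "\<dots> = (\<Sum>k. ennreal (pmf (bernoulli_pmf (p k)) b * measure (cookie_space p) {\<omega>. failures \<omega> k < x}))"
    by (simp add: emeasure_coordinate_failures_less emeasure_eq_measure ennreal_mult)
  finally show ?thesis .
qed

lemma failure_probabilities_sums:
  assumes p: "\<And>i. 0 \<le> p i \<and> p i \<le> 1" and AE: "AE \<omega> in cookie_space p. \<exists>\<^sub>\<infinity>i. \<not> \<omega> i"
  shows "(\<lambda>k. (1 - p k) * measure (cookie_space p) {\<omega>. failures \<omega> k < x}) sums real x"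
proof -
  interpret prob_space "cookie_space p"
    by (rule prob_space_cookie_space)
  define f where "f k = (1 - p k) * prob {\<omega>. failures \<omega> k < x}" for k
  have f: "0 \<le> f k" for k
    using p[of k] by (simp add: f_def)
  have "ennreal (real x) = (\<Sum>k. ennreal (f k))"
    using nn_integral_count_before_hitting_time[OF AE, of False x] p
    by (simp add: f_def emeasure_space_1[unfolded space_cookie_space] ennreal_of_nat_eq_real_of_nat)
  then have "(\<lambda>k. ennreal (f k)) sums ennreal (real x)"
    using summable_sums[OF summableI, of "\<lambda>k. ennreal (f k)"] by simp
  then show ?thesis
    unfolding f_def[symmetric] using f by (subst (asm) sums_ennreal) auto
qed

lemma
  fixes p :: "nat \<Rightarrow> real"
  assumes p: "\<And>i. 1/2 \<le> p i \<and> p i \<le> 1" and summable: "summable (\<lambda>i. 2 * p i - 1)"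
  shows integrable_U: "integrable (cookie_space p) (\<lambda>\<omega>. real (U x \<omega>))"
    and rho_eq_suminf: "rho p x = (\<Sum>k. (2 * p k - 1) * measure (cookie_space p) {\<omega>. failures \<omega> k < x})"
proof -
  interpret prob_space "cookie_space p"
    by (rule prob_space_cookie_space)
  define a where "a k = prob {\<omega>. failures \<omega> k < x}" for k
  have p01: "0 \<le> p i \<and> p i \<le> 1" for i
    using p[of i] by simp
  have "eventually (\<lambda>i. p i \<le> 3/4) sequentially"
    using summable_LIMSEQ_zero[OF summable]
    by (rule order_tendstoD(2)[where a="1/2", THEN eventually_mono]) simp_all
  then have AE: "AE \<omega> in cookie_space p. \<exists>\<^sub>\<infinity>i. \<not> \<omega> i"
    using p01 by (intro AE_infinitely_many_failures[where c="3/4"]) auto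
  have failures_sums: "(\<lambda>k. (1 - p k) * a k) sums real x"
    unfolding a_def using p01 AE by (rule failure_probabilities_sums)
  have successes_nonneg: "0 \<le> p k * a k" for k
    using p01[of k] by (simp add: a_def)
  have "summable (\<lambda>k. (1 - p k) * a k + (2 * p k - 1))"
    using failures_sums summable by (intro summable_add) (auto simp: sums_iff)
  then have successes_summable: "summable (\<lambda>k. p k * a k)"
  proof (rule summable_comparison_test')
    fix k
    have "p k * a k = (1 - p k) * a k + (2 * p k - 1) * a k"
      by algebra
    also have "\<dots> \<le> (1 - p k) * a k + (2 * p k - 1)"
      using p[of k] by (simp add: a_def mult_left_le)
    finally show "norm (p k * a k) \<le> (1 - p k) * a k + (2 * p k - 1)"
      using successes_nonneg by simp
  qed
  have nn_integral_U:
    "(\<integral>\<^sup>+\<omega>. ennreal (real (U x \<omega>)) \<partial>cookie_space p) = ennreal (\<Sum>k. p k * a k)"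
    using nn_integral_count_before_hitting_time[OF AE, of True x] p01
    by (simp add: a_def suminf_ennreal2[OF successes_nonneg successes_summable, unfolded a_def]
        ennreal_of_nat_eq_real_of_nat)
  then show "integrable (cookie_space p) (\<lambda>\<omega>. real (U x \<omega>))"
    by (intro integrableI_nonneg) auto
  have "(\<integral>\<omega>. real (U x \<omega>) \<partial>cookie_space p) = (\<Sum>k. p k * a k)"
    using nn_integral_U by (simp add: integral_eq_nn_integral suminf_nonneg[OF successes_summable successes_nonneg])
  then have "rho p x = (\<Sum>k. p k * a k) - (\<Sum>k. (1 - p k) * a k)"
    unfolding rho_def using failures_sums by (simp add: sums_iff)
  also have "\<dots> = (\<Sum>k. (2 * p k - 1) * a k)"
    using failures_sums by (subst suminf_diff[OF successes_summable]) (auto simp: sums_iff algebra_simps)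
  finally show "rho p x = (\<Sum>k. (2 * p k - 1) * measure (cookie_space p) {\<omega>. failures \<omega> k < x})"
    by (simp add: a_def)
qed

lemma
  fixes p :: "nat \<Rightarrow> real"
  assumes p: "\<And>i. 1/2 \<le> p i \<and> p i \<le> 1" and summable: "summable (\<lambda>i. 2 * p i - 1)"
  shows rho_lower_bound: "(\<Sum>k<x. 2 * p k - 1) \<le> rho p x"
    and rho_upper_bound: "rho p x \<le> (\<Sum>k. 2 * p k - 1)"
proof -
  interpret prob_space "cookie_space p"
    by (rule prob_space_cookie_space)
  define a where "a k = prob {\<omega>. failures \<omega> k < x}" for k
  have q: "0 \<le> 2 * p k - 1" for k
    using p[of k] by simp
  have a: "0 \<le> a k" "a k \<le> 1" for k
    by (simp_all add: a_def)
  have bound: "norm ((2 * p k - 1) * a k) \<le> 2 * p k - 1" for k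
    using q a by (simp add: mult_left_le)
  have summable_qa: "summable (\<lambda>k. (2 * p k - 1) * a k)"
    using summable bound by (rule summable_comparison_test'[where N=0])
  have rho: "rho p x = (\<Sum>k. (2 * p k - 1) * a k)"
    unfolding a_def by (rule rho_eq_suminf[OF p summable])
  have "a k = 1" if "k < x" for k
  proof -
    have "{\<omega>. failures \<omega> k < x} = UNIV"
      using failures_le[of _ k] that by (auto intro: le_less_trans)
    then show ?thesis
      using prob_space by (simp add: a_def)
  qed
  then have "(\<Sum>k<x. 2 * p k - 1) = (\<Sum>k<x. (2 * p k - 1) * a k)"
    by simp
  also have "\<dots> \<le> rho p x"
    unfolding rho using q a by (intro sum_le_suminf[OF summable_qa]) auto
  finally show "(\<Sum>k<x. 2 * p k - 1) \<le> rho p x" .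
  show "rho p x \<le> (\<Sum>k. 2 * p k - 1)"
    unfolding rho using q a by (intro suminf_le[OF _ summable_qa summable]) (simp add: mult_left_le)
qed

theorem lemma4p1:
  fixes p :: "nat \<Rightarrow> real" and \<delta> :: real
  assumes "\<And>i. 1/2 \<le> p i \<and> p i < 1"
    and "summable (\<lambda>i. 2 * p i - 1)"
    and "\<delta> = (\<Sum>i. 2 * p i - 1)"
  shows "(\<forall>x::nat. x \<ge> 1 \<longrightarrow> integrable (cookie_space p) (\<lambda>\<omega>. real (U x \<omega>)))
     \<and> (rho p \<longlonglongrightarrow> \<delta>)
     \<and> (\<forall>x::nat. x \<ge> 1 \<longrightarrow> rho p x \<le> \<delta>)"
proof -
  have p: "1/2 \<le> p i \<and> p i \<le> 1" for i
    using assms(1)[of i] by simp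
  have "rho p \<longlonglongrightarrow> \<delta>"
  proof (rule tendsto_sandwich)
    show "eventually (\<lambda>x. (\<Sum>k<x. 2 * p k - 1) \<le> rho p x) sequentially"
      using rho_lower_bound[OF p assms(2)] by simp
    show "eventually (\<lambda>x. rho p x \<le> \<delta>) sequentially"
      using rho_upper_bound[OF p assms(2)] assms(3) by simp
    show "(\<lambda>x. \<Sum>k<x. 2 * p k - 1) \<longlonglongrightarrow> \<delta>"
      unfolding assms(3) by (rule summable_LIMSEQ[OF assms(2)])
  qed simp
  then show ?thesis
    using integrable_U[OF p assms(2)] rho_upper_bound[OF p assms(2)] assms(3) by simp
qed

end
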